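(* For every fixed $c\in(0,1)$, \[ \Pr\bigl[L_n\le c\ln n\bigr]=\exp\bigl(-(K(c)+o(1))\ln n\bigr)\qquad(n\to\infty), \] where $K(c)=\dfrac{(1-c)^2}{8c}$.
   Context: Let $\xi_1,\xi_2,\dots$ be i.i.d. random variables with $\Pr[\xi_i=1]=\Pr[\xi_i=-1]=1/2$, and let $S_t=\sum_{i=1}^t\xi_i$ (simple symmetric random walk, $S_0=0$). Define $L_n=\sum_{i=1}^n S_i^2/i^2$. *)

theory Defs
  imports "HOL-Probability.Probability"
begin

text \<open>A sample path of the first n steps is a list xs of length n with entries in {-1,1};
  under the i.i.d. fair-sign law all 2^n such lists are equally likely.\<close>

definition sign_paths :: "nat \<Rightarrow> real list set" where
  "sign_paths n = {xs. length xs = n \<and> set xs \<subseteq> {-1, 1}}"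

text \<open>Walk position S_t = xi_1 + ... + xi_t (list entry i is xi_(i+1)); S_0 = 0.\<close>
definition walk :: "real list \<Rightarrow> nat \<Rightarrow> real" where
  "walk xs t = (\<Sum>i<t. xs ! i)"

definition Lstat :: "nat \<Rightarrow> real list \<Rightarrow> real" where
  "Lstat n xs = (\<Sum>i=1..n. (walk xs i)^2 / (real i)^2)"

definition small_L_prob :: "real \<Rightarrow> nat \<Rightarrow> real" where
  "small_L_prob c n =
     measure_pmf.prob (pmf_of_set (sign_paths n)) {xs. Lstat n xs \<le> c * ln (real n)}"

definition Krate :: "real \<Rightarrow> real" where
  "Krate c = (1 - c)^2 / (8 * c)"

end

theory Submission
  imports Defs
begin

text \<open>
  Write \<open>\<Lambda>\<^sub>n(\<lambda>) = E exp (- \<lambda> L\<^sub>n)\<close>. For \<open>\<lambda> = \<kappa> + 2\<kappa>\<^sup>2\<close> one has \<open>\<Lambda>\<^sub>n(\<lambda>) = n^(-\<kappa> + o(1))\<close>.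
  Conditioning on the position of the walk turns \<open>\<Lambda>\<^sub>n\<close> into a backward recursion in \<open>(t, S\<^sub>t)\<close>.
  Exponentials of the potential \<open>\<beta> (1/t - 1/n) S\<^sup>2\<close>, \<open>\<beta> < \<kappa>\<close>, are super-solutions because
  \<open>cosh x \<le> exp (x\<^sup>2/2)\<close>; after tilting each step by \<open>tanh (2\<kappa>S/t)\<close>, exponentials of
  \<open>a S\<^sup>2/t + b S\<^sup>4/t\<^sup>2\<close>, \<open>a > \<kappa>\<close>, are sub-solutions. The potential increments sum to
  \<open>\<beta> ln n\<close> resp. \<open>a ln n\<close> up to constants.

  With \<open>\<kappa> = (1 - c)/(4c)\<close>, the Chernoff bound \<open>P[L\<^sub>n \<le> c ln n] \<le> n^(\<lambda>c) \<Lambda>\<^sub>n(\<lambda>)\<close> gives the upper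
  bound \<open>n^(-K(c) + o(1))\<close>. For the lower bound take \<open>c\<^sub>1 < c\<^sub>0 < c\<close> and \<open>\<lambda>\<close> optimal for \<open>c\<^sub>0\<close>:
  by strict convexity of the Legendre pairing, the parts of \<open>\<Lambda>\<^sub>n(\<lambda>)\<close> coming from
  \<open>L\<^sub>n > c ln n\<close> and from \<open>L\<^sub>n < c\<^sub>1 ln n\<close> are negligible, so
  \<open>P[L\<^sub>n \<le> c ln n] \<ge> n^(\<lambda>c\<^sub>1) \<Lambda>\<^sub>n(\<lambda>)/2 \<ge> n^(-K(c\<^sub>1) - o(1))\<close>, and \<open>K(c\<^sub>1) \<rightarrow> K(c)\<close>.
\<close>

section \<open>Elementary inequalities for cosh and tanh\<close>

lemma tanh_le_self:
  fixes x :: real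
  assumes "0 \<le> x"
  shows "tanh x \<le> x"
proof -
  have "(\<lambda>x. x - tanh x) 0 \<le> (\<lambda>x. x - tanh x) x"
  proof (rule DERIV_nonneg_imp_nondecreasing[OF assms])
    fix y :: real
    show "\<exists>d. ((\<lambda>x. x - tanh x) has_real_derivative d) (at y) \<and> 0 \<le> d"
      by (rule exI[of _ "1 - (1 - tanh y ^ 2)"]) (auto intro!: derivative_eq_intros)
  qed
  then show ?thesis by simp
qed

lemma tanh_ge_cubic:
  fixes x :: real
  assumes "0 \<le> x"
  shows "x - x^3 / 3 \<le> tanh x"
proof -
  have "(\<lambda>x. tanh x - x + x^3/3) 0 \<le> (\<lambda>x. tanh x - x + x^3/3) x"
  proof (rule DERIV_nonneg_imp_nondecreasing[OF assms])
    fix y :: real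
    assume "0 \<le> y"
    then have "tanh y ^ 2 \<le> y^2"
      using tanh_le_self by (simp add: power_mono)
    then show "\<exists>d. ((\<lambda>x. tanh x - x + x^3/3) has_real_derivative d) (at y) \<and> 0 \<le> d"
      by (intro exI[of _ "(1 - tanh y ^ 2) - 1 + 3 * y^2 / 3"])
        (auto intro!: derivative_eq_intros simp: power2_eq_square)
  qed
  then show ?thesis by simp
qed

lemma mult_tanh_nonneg:
  fixes k S :: real
  assumes "0 \<le> k"
  shows "0 \<le> S * tanh (k * S)"
  using assms by (cases "0 \<le> S") (auto simp: mult_nonneg_nonneg mult_nonpos_nonpos mult_nonneg_nonpos)

lemma mult_tanh_ge:
  fixes q S :: real
  assumes "0 \<le> q"
  shows "2 * q * S^2 - 8/3 * q^3 * S^4 \<le> S * tanh (2 * q * S)"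
proof -
  have pos: "2 * q * S^2 - 8/3 * q^3 * S^4 \<le> S * tanh (2 * q * S)" if "0 \<le> S" for S
  proof -
    have "S * (2 * q * S - (2 * q * S)^3 / 3) \<le> S * tanh (2 * q * S)"
      using tanh_ge_cubic assms that by (intro mult_left_mono) auto
    then show ?thesis by (simp add: algebra_simps power2_eq_square power3_eq_cube power4_eq_xxxx)
  qed
  show ?thesis
    using pos[of S] pos[of "-S"] by (cases "0 \<le> S") auto
qed

lemma mult_tanh_minus_ln_cosh_le:
  fixes y :: real
  shows "y * tanh y - ln (cosh y) \<le> y^2 / 2"
proof -
  have pos: "y * tanh y - ln (cosh y) \<le> y^2 / 2" if "0 \<le> y" for y :: real
  proof -
    have "(\<lambda>y. y^2/2 - y * tanh y + ln (cosh y)) 0 \<le> (\<lambda>y. y^2/2 - y * tanh y + ln (cosh y)) y"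
    proof (rule DERIV_nonneg_imp_nondecreasing[OF that])
      fix z :: real
      assume "0 \<le> z"
      have "((\<lambda>y. y^2/2 - y * tanh y + ln (cosh y)) has_real_derivative
              (z - (tanh z + z * (1 - tanh z ^ 2)) + sinh z / cosh z)) (at z)"
        by (auto intro!: derivative_eq_intros simp: power2_eq_square)
      moreover have "z - (tanh z + z * (1 - tanh z ^ 2)) + sinh z / cosh z = z * tanh z ^ 2"
        by (simp add: tanh_def algebra_simps)
      ultimately show "\<exists>d. ((\<lambda>y. y^2/2 - y * tanh y + ln (cosh y)) has_real_derivative d) (at z) \<and> 0 \<le> d"
        using \<open>0 \<le> z\<close> by auto
    qed
    then show ?thesis by simp
  qed
  show ?thesis
    using pos[of y] pos[of "-y"] by (cases "0 \<le> y") auto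
qed

lemma cosh_le_exp_half_square:
  fixes x :: real
  shows "cosh x \<le> exp (x^2 / 2)"
proof -
  have pos: "ln (cosh x) \<le> x^2 / 2" if "0 \<le> x" for x :: real
  proof -
    have "(\<lambda>x. x^2/2 - ln (cosh x)) 0 \<le> (\<lambda>x. x^2/2 - ln (cosh x)) x"
    proof (rule DERIV_nonneg_imp_nondecreasing[OF that])
      fix z :: real
      assume "0 \<le> z"
      have "((\<lambda>x. x^2/2 - ln (cosh x)) has_real_derivative (z - tanh z)) (at z)"
        by (auto intro!: derivative_eq_intros simp: power2_eq_square tanh_def)
      then show "\<exists>d. ((\<lambda>x. x^2/2 - ln (cosh x)) has_real_derivative d) (at z) \<and> 0 \<le> d"
        using tanh_le_self[OF \<open>0 \<le> z\<close>] by auto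
    qed
    then show ?thesis by simp
  qed
  have "ln (cosh x) \<le> x^2 / 2"
    using pos[of x] pos[of "-x"] by (cases "0 \<le> x") auto
  then show ?thesis
    by (metis cosh_real_pos exp_le_cancel_iff exp_ln)
qed

lemma average_exp_neg_shifted_square_le:
  fixes q S :: real
  shows "(exp (- (q * (S + 1)^2)) + exp (- (q * (S - 1)^2))) / 2 \<le> exp (- q - (q - 2 * q^2) * S^2)"
proof -
  have "(exp (- (q * (S + 1)^2)) + exp (- (q * (S - 1)^2))) / 2 = exp (- q - q * S^2) * cosh (2 * q * S)"
    by (simp add: cosh_field_def exp_add[symmetric] power2_eq_square algebra_simps add_divide_distrib)
  also have "\<dots> \<le> exp (- q - q * S^2) * exp ((2 * q * S)^2 / 2)"
    by (intro mult_left_mono cosh_le_exp_half_square) simp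
  also have "\<dots> = exp (- q - (q - 2 * q^2) * S^2)"
    by (simp add: exp_add[symmetric] power2_eq_square algebra_simps)
  finally show ?thesis .
qed

text \<open>Gibbs' variational principle for a fair coin: tilting it to \<open>p = (1 - tanh y)/2\<close> costs
  relative entropy \<open>y tanh y - ln (cosh y) \<le> y\<^sup>2/2\<close>.\<close>
lemma exp_tilted_mean_le_average:
  fixes A B y :: real
  defines "p \<equiv> (1 - tanh y) / 2"
  shows "exp (p * A + (1 - p) * B - y^2 / 2) \<le> (exp A + exp B) / 2"
proof -
  have p: "0 \<le> p" "p \<le> 1"
    using tanh_real_bounds[of y] by (auto simp: p_def)
  have c: "cosh y > 0" by simp
  have "1 - tanh y = exp (- y) / cosh y" "1 + tanh y = exp y / cosh y"
    using cosh_minus_sinh[of y] cosh_plus_sinh[of y] c by (simp_all add: tanh_def field_simps)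
  then have "p = exp (- y) / (2 * cosh y)" "1 - p = exp y / (2 * cosh y)"
    by (simp_all add: p_def field_simps)
  then have halves: "p * exp (A + y + ln (cosh y)) = exp A / 2" "(1 - p) * exp (B - y + ln (cosh y)) = exp B / 2"
    using c by (simp_all add: exp_add exp_diff exp_minus)
  have "p * (A + y + ln (cosh y)) + (1 - p) * (B - y + ln (cosh y)) =
      p * A + (1 - p) * B - y * tanh y + ln (cosh y)"
    by (simp add: p_def field_simps)
  then have "p * A + (1 - p) * B - y^2 / 2 \<le> p * (A + y + ln (cosh y)) + (1 - p) * (B - y + ln (cosh y))"
    using mult_tanh_minus_ln_cosh_le[of y] by linarith
  then have "exp (p * A + (1 - p) * B - y^2 / 2) \<le>
      exp ((1 - p) * (B - y + ln (cosh y)) + p * (A + y + ln (cosh y)))"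
    by (simp add: add.commute)
  also have "\<dots> \<le> (1 - p) * exp (B - y + ln (cosh y)) + p * exp (A + y + ln (cosh y))"
    using convex_onD[OF exp_convex, of p] p by simp
  finally show ?thesis using halves by simp
qed

section \<open>Sign paths and the backward recursion\<close>

lemma sign_paths_0: "sign_paths 0 = {[]}"
  by (auto simp: sign_paths_def)

lemma sign_paths_Suc: "sign_paths (Suc m) = (\<lambda>(x, xs). x # xs) ` ({-1, 1} \<times> sign_paths m)"
proof
  show "sign_paths (Suc m) \<subseteq> (\<lambda>(x, xs). x # xs) ` ({-1, 1} \<times> sign_paths m)"
  proof
    fix ys
    assume "ys \<in> sign_paths (Suc m)"
    then obtain x xs where "ys = x # xs" "x \<in> {-1, 1}" "xs \<in> sign_paths m"
      unfolding sign_paths_def by (cases ys) auto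
    then show "ys \<in> (\<lambda>(x, xs). x # xs) ` ({-1, 1} \<times> sign_paths m)"
      by (auto intro!: image_eqI[of _ _ "(x, xs)"])
  qed
qed (auto simp: sign_paths_def)

lemma finite_sign_paths: "finite (sign_paths m)"
  by (induction m) (auto simp: sign_paths_0 sign_paths_Suc)

lemma sign_paths_nonempty: "sign_paths m \<noteq> {}"
proof -
  have "replicate m 1 \<in> sign_paths m" by (auto simp: sign_paths_def)
  then show ?thesis by auto
qed

lemma inj_on_Cons_pair: "inj_on (\<lambda>(x, xs). x # xs) A"
  by (auto simp: inj_on_def)

lemma card_sign_paths: "card (sign_paths m) = 2 ^ m"
proof (induction m)
  case (Suc m)
  have "card (sign_paths (Suc m)) = card ({-1 :: real, 1} \<times> sign_paths m)"
    unfolding sign_paths_Suc by (rule card_image[OF inj_on_Cons_pair])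
  with Suc show ?case by (simp add: card_cartesian_product)
qed (simp add: sign_paths_0)

lemma sum_sign_paths_Suc:
  "(\<Sum>ys\<in>sign_paths (Suc m). f ys) = (\<Sum>xs\<in>sign_paths m. f (1 # xs)) + (\<Sum>xs\<in>sign_paths m. f (-1 # xs))"
proof -
  have "(\<Sum>ys\<in>sign_paths (Suc m). f ys) = (\<Sum>x\<in>{-1 :: real, 1}. \<Sum>xs\<in>sign_paths m. f (x # xs))"
    unfolding sign_paths_Suc sum.reindex[OF inj_on_Cons_pair]
    by (simp add: sum.cartesian_product case_prod_unfold)
  then show ?thesis by (simp add: add.commute)
qed

lemma walk_0 [simp]: "walk xs 0 = 0"
  by (simp add: walk_def)

lemma walk_Cons_Suc: "walk (x # xs) (Suc j) = x + walk xs j"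
  unfolding walk_def by (subst sum.lessThan_Suc_shift) simp

definition path_expectation :: "nat \<Rightarrow> (real list \<Rightarrow> real) \<Rightarrow> real" where
  "path_expectation n f = (\<Sum>xs\<in>sign_paths n. f xs) / 2 ^ n"

lemma path_expectation_mono:
  "(\<And>xs. xs \<in> sign_paths n \<Longrightarrow> f xs \<le> g xs) \<Longrightarrow> path_expectation n f \<le> path_expectation n g"
  unfolding path_expectation_def by (intro divide_right_mono sum_mono) auto

lemma path_expectation_add:
  "path_expectation n (\<lambda>xs. f xs + g xs) = path_expectation n f + path_expectation n g"
  unfolding path_expectation_def by (simp add: sum.distrib add_divide_distrib)

lemma path_expectation_cmult: "path_expectation n (\<lambda>xs. c * f xs) = c * path_expectation n f"
  unfolding path_expectation_def by (simp add: sum_distrib_left[symmetric])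

lemma path_expectation_pos: "(\<And>xs. 0 < f xs) \<Longrightarrow> 0 < path_expectation n f"
  unfolding path_expectation_def using finite_sign_paths sign_paths_nonempty
  by (intro divide_pos_pos sum_pos) auto

lemma path_expectation_Suc:
  "path_expectation (Suc m) f =
     (path_expectation m (\<lambda>xs. f (1 # xs)) + path_expectation m (\<lambda>xs. f (-1 # xs))) / 2"
  unfolding path_expectation_def sum_sign_paths_Suc by (simp add: field_simps)

lemma small_L_prob_eq_path_expectation:
  "small_L_prob c n = path_expectation n (\<lambda>xs. if Lstat n xs \<le> c * ln (real n) then 1 else 0)"
proof -
  have "small_L_prob c n = card (sign_paths n \<inter> {xs. Lstat n xs \<le> c * ln (real n)}) / card (sign_paths n)"
    unfolding small_L_prob_def by (rule measure_pmf_of_set[OF sign_paths_nonempty finite_sign_paths])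
  also have "real (card (sign_paths n \<inter> {xs. Lstat n xs \<le> c * ln (real n)})) =
      (\<Sum>xs\<in>sign_paths n. if Lstat n xs \<le> c * ln (real n) then 1 else 0)"
    using finite_sign_paths[of n] by (simp add: sum.If_cases Int_def)
  finally show ?thesis
    unfolding path_expectation_def card_sign_paths by simp
qed

text \<open>\<open>walk_laplace w m t S = E[exp (- (w (t+1) S\<^sub>t\<^sub>+\<^sub>1\<^sup>2 + \<dots> + w (t+m) S\<^sub>t\<^sub>+\<^sub>m\<^sup>2)) | S\<^sub>t = S]\<close>.\<close>
definition walk_laplace :: "(nat \<Rightarrow> real) \<Rightarrow> nat \<Rightarrow> nat \<Rightarrow> real \<Rightarrow> real" where
  "walk_laplace w m t S =
     path_expectation m (\<lambda>xs. exp (- (\<Sum>j<m. w (t + Suc j) * (S + walk xs (Suc j))^2)))"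

lemma walk_laplace_0 [simp]: "walk_laplace w 0 t S = 1"
  by (simp add: walk_laplace_def path_expectation_def sign_paths_0)

lemma walk_laplace_pos: "0 < walk_laplace w m t S"
  unfolding walk_laplace_def by (rule path_expectation_pos) simp

lemma walk_laplace_Suc:
  "walk_laplace w (Suc m) t S =
     (exp (- (w (Suc t) * (S + 1)^2)) * walk_laplace w m (Suc t) (S + 1) +
      exp (- (w (Suc t) * (S - 1)^2)) * walk_laplace w m (Suc t) (S - 1)) / 2"
proof -
  have "exp (- (\<Sum>j<Suc m. w (t + Suc j) * (S + walk (x # xs) (Suc j))^2)) =
      exp (- (w (Suc t) * (S + x)^2)) *
      exp (- (\<Sum>j<m. w (Suc t + Suc j) * ((S + x) + walk xs (Suc j))^2))" for x xs
    by (subst sum.lessThan_Suc_shift) (simp add: walk_Cons_Suc exp_add[symmetric] algebra_simps)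
  then show ?thesis
    unfolding walk_laplace_def path_expectation_Suc
    by (simp add: path_expectation_cmult)
qed

definition L_laplace :: "real \<Rightarrow> nat \<Rightarrow> real" where
  "L_laplace lam n = walk_laplace (\<lambda>j. lam / (real j)^2) n 0 0"

lemma L_laplace_pos: "0 < L_laplace lam n"
  by (simp add: L_laplace_def walk_laplace_pos)

lemma L_laplace_eq_path_expectation:
  "L_laplace lam n = path_expectation n (\<lambda>xs. exp (- lam * Lstat n xs))"
proof -
  have "(\<Sum>j<n. lam / (real (0 + Suc j))^2 * (0 + walk xs (Suc j))^2) = lam * Lstat n xs" for xs
    unfolding Lstat_def sum_distrib_left
    using sum.atLeast1_atMost_eq[of "\<lambda>i. lam * ((walk xs i)^2 / (real i)^2)" n] by simp
  then show ?thesis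
    unfolding L_laplace_def walk_laplace_def by simp
qed

section \<open>Comparison principles for the backward recursion\<close>

lemma walk_laplace_le_exp_potential:
  assumes w'_le: "\<And>j. w' j \<le> w j"
    and step: "\<And>t. t < N \<Longrightarrow> g t \<le> (w' (Suc t) + g (Suc t)) - 2 * (w' (Suc t) + g (Suc t))^2"
    and final: "g N \<le> 0"
  shows "t \<le> N \<Longrightarrow> walk_laplace w (N - t) t S \<le> exp (- (\<Sum>j\<in>{t<..N}. w' j + g j) - g t * S^2)"
proof (induction "N - t" arbitrary: t S)
  case 0
  then have "t = N" by simp
  moreover have "0 \<le> - g N * S^2"
    using final by (simp add: mult_nonpos_nonneg)
  ultimately show ?case by simp
next
  case (Suc k)
  define s where "s = Suc t"
  define R where "R = (\<Sum>j\<in>{s<..N}. w' j + g j)"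
  define q where "q = w' s + g s"
  have t: "t < N" "N - t = Suc (N - s)"
    using Suc by (auto simp: s_def)
  have shifted: "exp (- (w s * S'^2)) * walk_laplace w (N - s) s S' \<le> exp (- R) * exp (- (q * S'^2))"
    for S'
  proof -
    have "walk_laplace w (N - s) s S' \<le> exp (- R - g s * S'^2)"
      using Suc t by (simp add: s_def R_def)
    then have "exp (- (w s * S'^2)) * walk_laplace w (N - s) s S'
        \<le> exp (- (w' s * S'^2)) * exp (- R - g s * S'^2)"
      by (intro mult_mono) (auto intro: mult_right_mono w'_le simp: less_imp_le[OF walk_laplace_pos])
    also have "\<dots> = exp (- R) * exp (- (q * S'^2))"
      by (simp add: q_def exp_add[symmetric] algebra_simps)
    finally show ?thesis .
  qed
  have "walk_laplace w (N - t) t S =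
      (exp (- (w s * (S + 1)^2)) * walk_laplace w (N - s) s (S + 1) +
       exp (- (w s * (S - 1)^2)) * walk_laplace w (N - s) s (S - 1)) / 2"
    unfolding t(2) walk_laplace_Suc s_def ..
  also have "\<dots> \<le> exp (- R) * ((exp (- (q * (S + 1)^2)) + exp (- (q * (S - 1)^2))) / 2)"
    using shifted[of "S + 1"] shifted[of "S - 1"] by (simp add: algebra_simps)
  also have "\<dots> \<le> exp (- R) * exp (- q - (q - 2 * q^2) * S^2)"
    by (intro mult_left_mono average_exp_neg_shifted_square_le) simp
  also have "\<dots> \<le> exp (- R) * exp (- q - g t * S^2)"
    using step[OF t(1)] unfolding q_def s_def
    by (intro mult_left_mono) (auto intro!: mult_right_mono)
  also have "\<dots> = exp (- (\<Sum>j\<in>{t<..N}. w' j + g j) - g t * S^2)"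
  proof -
    have "{t<..N} = insert s {s<..N}"
      using t by (auto simp: s_def)
    then show ?thesis
      unfolding R_def q_def by (simp add: exp_add[symmetric])
  qed
  finally show ?case .
qed

lemma exp_potential_le_walk_laplace:
  assumes step: "\<And>t S. t0 \<le> t \<Longrightarrow> t < N \<Longrightarrow>
      (1 - tanh (y t S)) / 2 * (w (Suc t) * (S + 1)^2 + Phi (Suc t) (S + 1)) +
      (1 - (1 - tanh (y t S)) / 2) * (w (Suc t) * (S - 1)^2 + Phi (Suc t) (S - 1))
      + (y t S)^2 / 2 \<le> Phi t S"
    and final: "\<And>S. 0 \<le> Phi N S"
  shows "t0 \<le> t \<Longrightarrow> t \<le> N \<Longrightarrow> exp (- Phi t S) \<le> walk_laplace w (N - t) t S"
proof (induction "N - t" arbitrary: t S)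
  case 0
  then show ?case using final[of S] by simp
next
  case (Suc k)
  define s where "s = Suc t"
  define p where "p = (1 - tanh (y t S)) / 2"
  define A where "A = - (w s * (S + 1)^2 + Phi s (S + 1))"
  define B where "B = - (w s * (S - 1)^2 + Phi s (S - 1))"
  have t: "t < N" "N - t = Suc (N - s)"
    using Suc by (auto simp: s_def)
  have shifted: "exp (- (w s * S'^2 + Phi s S')) \<le> exp (- (w s * S'^2)) * walk_laplace w (N - s) s S'"
    for S'
  proof -
    have "exp (- Phi s S') \<le> walk_laplace w (N - s) s S'"
      using Suc t by (simp add: s_def)
    then have "exp (- (w s * S'^2)) * exp (- Phi s S') \<le> exp (- (w s * S'^2)) * walk_laplace w (N - s) s S'"
      by (intro mult_left_mono) simp_all
    then show ?thesis
      by (simp add: exp_add[symmetric])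
  qed
  have "p * (w s * (S + 1)^2 + Phi s (S + 1)) + (1 - p) * (w s * (S - 1)^2 + Phi s (S - 1))
      + (y t S)^2 / 2 \<le> Phi t S"
    using step[OF Suc.prems(1) t(1)] unfolding p_def s_def .
  moreover have "p * A + (1 - p) * B =
      - (p * (w s * (S + 1)^2 + Phi s (S + 1)) + (1 - p) * (w s * (S - 1)^2 + Phi s (S - 1)))"
    unfolding A_def B_def by (simp add: algebra_simps)
  ultimately have "- Phi t S \<le> p * A + (1 - p) * B - (y t S)^2 / 2"
    by linarith
  then have "exp (- Phi t S) \<le> exp (p * A + (1 - p) * B - (y t S)^2 / 2)"
    by simp
  also have "\<dots> \<le> (exp A + exp B) / 2"
    unfolding p_def by (rule exp_tilted_mean_le_average)
  also have "\<dots> \<le> (exp (- (w s * (S + 1)^2)) * walk_laplace w (N - s) s (S + 1) +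
      exp (- (w s * (S - 1)^2)) * walk_laplace w (N - s) s (S - 1)) / 2"
    unfolding A_def B_def by (intro divide_right_mono add_mono shifted) simp
  also have "\<dots> = walk_laplace w (N - t) t S"
    unfolding t(2) walk_laplace_Suc s_def ..
  finally show ?case .
qed

lemma walk_laplace_ge_initial_segment:
  fixes lam :: real
  defines "w \<equiv> \<lambda>j. lam / (real j)^2"
  assumes lam: "0 \<le> lam" and t0: "t0 \<le> N"
    and at_t0: "\<And>S. \<bar>S\<bar> \<le> real t0 \<Longrightarrow> exp (- D) \<le> walk_laplace w (N - t0) t0 S"
  shows "t \<le> t0 \<Longrightarrow> \<bar>S\<bar> \<le> real t \<Longrightarrow> exp (- (D + lam * (real t0 - real t))) \<le> walk_laplace w (N - t) t S"
proof (induction "t0 - t" arbitrary: t S)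
  case 0
  then show ?case using at_t0 by simp
next
  case (Suc k)
  define s where "s = Suc t"
  have t: "t < t0" "N - t = Suc (N - s)"
    using Suc t0 by (auto simp: s_def)
  have shifted: "exp (- lam) * exp (- (D + lam * (real t0 - real s))) \<le>
      exp (- (w s * S'^2)) * walk_laplace w (N - s) s S'" if "\<bar>S'\<bar> \<le> real s" for S'
  proof (rule mult_mono)
    have "S'^2 \<le> (real s)^2"
      using that by (metis abs_le_square_iff abs_of_nat)
    then have "w s * S'^2 \<le> w s * (real s)^2"
      using lam by (intro mult_left_mono) (auto simp: w_def)
    then show "exp (- lam) \<le> exp (- (w s * S'^2))"
      by (simp add: w_def s_def)
    show "exp (- (D + lam * (real t0 - real s))) \<le> walk_laplace w (N - s) s S'"
      using Suc.hyps(1)[of s S'] Suc.hyps(2) t that by (simp add: s_def)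
  qed auto
  have "exp (- (D + lam * (real t0 - real t))) = exp (- lam) * exp (- (D + lam * (real t0 - real s)))"
    by (simp add: s_def exp_add[symmetric] algebra_simps)
  also have "\<dots> \<le> (exp (- (w s * (S + 1)^2)) * walk_laplace w (N - s) s (S + 1) +
      exp (- (w s * (S - 1)^2)) * walk_laplace w (N - s) s (S - 1)) / 2"
  proof -
    have "\<bar>S + 1\<bar> \<le> real s" "\<bar>S - 1\<bar> \<le> real s"
      using Suc.prems by (auto simp: s_def)
    from shifted[OF this(1)] shifted[OF this(2)] show ?thesis
      by (simp add: s_def)
  qed
  also have "\<dots> = walk_laplace w (N - t) t S"
    unfolding t(2) walk_laplace_Suc s_def ..
  finally show ?case .
qed

section \<open>Upper bound for the Laplace transform of \<open>L\<^sub>n\<close>\<close>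

lemma upper_potential_step_ineq:
  fixes t N lam beta eta :: real
  assumes t: "1 \<le> t" "t + 1 \<le> N" and b: "0 < beta"
    and eta: "eta = lam - beta - 2 * beta^2" "0 < eta"
    and t_large: "(beta + 4 * beta * lam + 2 * lam^2) / eta \<le> t"
  shows "beta * (1/t - 1/N) \<le>
    (lam / (t+1)^2 + beta * (1/(t+1) - 1/N)) - 2 * (lam / (t+1)^2 + beta * (1/(t+1) - 1/N))^2"
proof -
  define s where "s = t + 1"
  define q where "q = lam / s^2 + beta * (1/s - 1/N)"
  have lam: "0 < lam"
    using eta b by (smt (verit) zero_le_power2)
  have s: "1 \<le> s" "0 < s"
    using t s_def by auto
  have "0 \<le> beta * (1/s - 1/N)"
    using b t s s_def by (intro mult_nonneg_nonneg) (auto simp: field_simps)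
  then have "0 \<le> q"
    unfolding q_def using lam by simp
  moreover have "q \<le> lam / s^2 + beta / s"
    unfolding q_def using b t by (simp add: field_simps)
  ultimately have "2 * q^2 \<le> 2 * (lam / s^2 + beta / s)^2"
    by (simp add: power_mono)
  also have "\<dots> = 2 * (lam / s + beta)^2 / s^2"
    using s by (simp add: field_simps power2_eq_square)
  also have "\<dots> \<le> (lam - beta * s / t) / s^2"
  proof -
    have "lam / s \<le> lam / t" "lam / s \<le> lam"
      using lam s t s_def by (auto intro: divide_left_mono simp: field_simps)
    then have "(lam / s) * (lam / s + 2 * beta) \<le> (lam / t) * (lam + 2 * beta)"
      using lam s b t by (intro mult_mono) auto
    moreover have "(beta + 4 * beta * lam + 2 * lam^2) / t \<le> eta"
      using t_large t eta(2) by (simp add: field_simps)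
    moreover have "beta * s / t = beta + beta / t"
      using s_def t by (simp add: field_simps)
    moreover have "(lam / s + beta)^2 = beta^2 + (lam / s) * (lam / s + 2 * beta)"
      by (simp add: power2_eq_square algebra_simps)
    moreover have "beta / t + 2 * ((lam / t) * (lam + 2 * beta)) = (beta + 4 * beta * lam + 2 * lam^2) / t"
      by (simp add: add_divide_distrib power2_eq_square algebra_simps)
    ultimately have "beta * s / t + 2 * (lam / s + beta)^2 \<le> lam"
      using eta(1) by linarith
    then show ?thesis
      using s by (intro divide_right_mono) auto
  qed
  also have "\<dots> = lam / s^2 - beta / (t * s)"
    using s t by (simp add: diff_divide_distrib power2_eq_square)
  also have "\<dots> = lam / s^2 + beta / s - beta / t"
  proof -
    have "beta / s - beta / t = - beta / (t * s)"
      using s_def t by (simp add: field_simps)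
    then show ?thesis by simp
  qed
  finally show ?thesis
    unfolding q_def s_def by (simp add: algebra_simps)
qed

text \<open>The potential \<open>\<beta>(1/t - 1/N) S\<^sup>2\<close> is only used from time \<open>t\<^sub>0\<close> on; before \<open>t\<^sub>0\<close> the weights
  are dropped and the potential vanishes, so the supersolution condition is trivial there.\<close>
lemma upper_potential_condition:
  fixes beta lam eta :: real and t0 N t :: nat
  assumes b: "0 < beta" and eta: "eta = lam - beta - 2 * beta^2" "0 < eta"
    and t0: "1 \<le> t0" "2 * beta \<le> real t0" "(beta + 4 * beta * lam + 2 * lam^2) / eta \<le> real t0"
    and tN: "t < N"
  defines "w' \<equiv> \<lambda>j :: nat. if t0 < j then lam / (real j)^2 else 0"
    and "g \<equiv> \<lambda>t :: nat. if t0 \<le> t then beta * (1 / real t - 1 / real N) else 0"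
  shows "g t \<le> (w' (Suc t) + g (Suc t)) - 2 * (w' (Suc t) + g (Suc t))^2"
proof (cases "t0 \<le> t")
  case True
  then have "beta * (1 / real t - 1 / real N) \<le>
      (lam / (real t + 1)^2 + beta * (1 / (real t + 1) - 1 / real N))
      - 2 * (lam / (real t + 1)^2 + beta * (1 / (real t + 1) - 1 / real N))^2"
    using t0 tN b eta by (intro upper_potential_step_ineq[where eta = eta]) auto
  with True show ?thesis
    unfolding w'_def g_def by (simp add: add.commute)
next
  case False
  show ?thesis
  proof (cases "Suc t = t0")
    case True
    define q where "q = beta * (1 / real t0 - 1 / real N)"
    have q0: "0 \<le> q"
      unfolding q_def using b tN True by (intro mult_nonneg_nonneg) (auto simp: field_simps)
    have "q \<le> beta / real t0"
      unfolding q_def using b by (simp add: field_simps)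
    also have "\<dots> \<le> 1 / 2"
      using t0 b by (simp add: field_simps)
    finally have "2 * q * q \<le> 1 * q"
      using q0 by (intro mult_right_mono) auto
    then show ?thesis
      unfolding w'_def g_def using True False by (simp add: q_def power2_eq_square)
  next
    case False
    with \<open>\<not> t0 \<le> t\<close> show ?thesis
      unfolding w'_def g_def by simp
  qed
qed

lemma ln_ratio_le_sum_inverse:
  assumes "1 \<le> t0"
  shows "ln (real N + 1) - ln (real t0) \<le> (\<Sum>j\<in>{t0..N}. 1 / real j)"
proof (induction N)
  case 0
  then show ?case using assms by simp
next
  case (Suc N)
  show ?case
  proof (cases "Suc N < t0")
    case True
    then have "ln (real (Suc N) + 1) \<le> ln (real t0)" using assms by simp
    moreover have "{t0..Suc N} = {}" using True by auto
    ultimately show ?thesis by simp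
  next
    case False
    then have eq: "{t0..Suc N} = insert (Suc N) {t0..N}" by auto
    have x: "(real (Suc N) + 1) / (real N + 1) = 1 + 1 / real (Suc N)"
      by (simp add: field_simps)
    have "ln (real (Suc N) + 1) - ln (real N + 1) = ln ((real (Suc N) + 1) / (real N + 1))"
      by (subst ln_div) auto
    also have "\<dots> = ln (1 + 1 / real (Suc N))" by (simp only: x)
    also have "\<dots> \<le> 1 / real (Suc N)" by (rule ln_add_one_self_le_self) simp
    finally show ?thesis unfolding eq using Suc.IH by simp
  qed
qed

lemma ln_minus_one_le_sum_inverse_minus:
  assumes "1 \<le> t0" "1 \<le> N"
  shows "ln (real N) - ln (real t0) - 1 \<le> (\<Sum>j\<in>{t0..N}. 1 / real j - 1 / real N)"
proof -
  have "real (card {t0..N}) / real N \<le> 1"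
    using assms by (simp add: field_simps)
  moreover have "ln (real N) \<le> ln (real N + 1)"
    using assms by simp
  ultimately show ?thesis
    using ln_ratio_le_sum_inverse[OF assms(1), of N] by (simp add: sum_subtractf)
qed

lemma L_laplace_le_exp:
  assumes b: "0 < beta" and margin: "0 < lam - beta - 2 * beta^2"
  shows "\<exists>C. \<forall>N\<ge>1. L_laplace lam N \<le> exp (- beta * ln (real N) + C)"
proof -
  define eta where "eta = lam - beta - 2 * beta^2"
  have lam: "0 < lam"
    using margin b by (smt (verit) zero_le_power2)
  define t0 :: nat where "t0 = nat \<lceil>max 1 (max (2 * beta) ((beta + 4 * beta * lam + 2 * lam^2) / eta))\<rceil>"
  have t0: "1 \<le> t0" "2 * beta \<le> real t0" "(beta + 4 * beta * lam + 2 * lam^2) / eta \<le> real t0"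
    unfolding t0_def by linarith+
  show ?thesis
  proof (intro exI allI impI)
    fix N :: nat
    assume N: "1 \<le> N"
    define w' where "w' = (\<lambda>j :: nat. if t0 < j then lam / (real j)^2 else 0)"
    define g where "g = (\<lambda>t :: nat. if t0 \<le> t then beta * (1 / real t - 1 / real N) else 0)"
    have "L_laplace lam N \<le> exp (- (\<Sum>j\<in>{0<..N}. w' j + g j))"
      using walk_laplace_le_exp_potential[of w' "\<lambda>j. lam / (real j)^2" N g 0 0]
        upper_potential_condition[OF b eta_def _ t0] margin lam
      unfolding L_laplace_def w'_def g_def by (simp add: eta_def)
    also have "\<dots> \<le> exp (- (beta * ln (real N) - beta * ln (real t0) - beta))"
    proof -
      have nonneg: "0 \<le> w' j + g j" if "j \<le> N" for j
        using lam b that t0 by (auto simp: w'_def g_def field_simps intro!: mult_nonneg_nonneg)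
      have "beta * (ln (real N) - ln (real t0) - 1) \<le> (\<Sum>j\<in>{t0..N}. g j)"
        using ln_minus_one_le_sum_inverse_minus[OF t0(1) N] b
        by (simp add: g_def sum_distrib_left[symmetric])
      also have "\<dots> \<le> (\<Sum>j\<in>{t0..N}. w' j + g j)"
        using lam by (intro sum_mono) (simp add: w'_def)
      also have "\<dots> \<le> (\<Sum>j\<in>{0<..N}. w' j + g j)"
        using t0 nonneg by (intro sum_mono2) auto
      finally show ?thesis by (simp add: algebra_simps)
    qed
    finally show "L_laplace lam N \<le> exp (- beta * ln (real N) + (beta * ln (real t0) + beta))"
      by (simp add: algebra_simps)
  qed
qed

section \<open>Lower bound for the Laplace transform of \<open>L\<^sub>n\<close>\<close>

text \<open>The constant \<open>b\<close> is chosen so that the \<open>S\<^sup>2\<close>-coefficient of the potential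
  \<open>a/t S\<^sup>2 + b/t\<^sup>2 S\<^sup>4\<close> after one tilted step is exactly \<open>a (s + 1)/s\<^sup>2 - 4 k \<lambda>/s\<^sup>3\<close>.\<close>
lemma lower_potential_quadratic_coeff:
  fixes s t k a b lam :: real
  assumes t: "1 \<le> t" "s = t + 1" and k: "0 < k" "k < a"
    and lam: "lam = k + 2 * k^2" and b: "b = (a - k) * (1 + 4 * k) / 6"
  shows "(lam / s^2 + a / s) * (1 - 4 * (k / s)) + 6 * (b / s^2) + 2 * (k / s)^2 \<le> a / t"
proof -
  have s: "0 < s" using t by simp
  have b6: "6 * (b / s^2) = (a + 4 * a * k - k - 4 * k^2) / s^2"
    using b by (simp add: algebra_simps power2_eq_square)
  have "(lam / s^2 + a / s) * (1 - 4 * (k / s)) + 6 * (b / s^2) + 2 * (k / s)^2 =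
      a * (s + 1) / s^2 - 4 * k * lam / s^3"
    unfolding b6 lam using s by (simp add: field_simps power2_eq_square power3_eq_cube)
  also have "\<dots> \<le> a * (s + 1) / s^2"
    using k s lam by simp
  also have "\<dots> \<le> a / t"
  proof -
    have "a * (t * (s + 1)) \<le> a * s^2"
      using t k by (intro mult_left_mono) (auto simp: power2_eq_square algebra_simps)
    then show ?thesis using s t by (simp add: field_simps)
  qed
  finally show ?thesis .
qed

lemma lower_potential_quartic_coeff:
  fixes s t k a b lam :: real
  assumes t: "1 \<le> t" "s = t + 1" and pos: "0 < k" "0 < lam" "0 < a" "0 < b"
    and s_large: "16/3 * k^3 * (lam + a) / b \<le> s"
  shows "16/3 * (k / s)^3 * (lam / s^2 + a / s) + b / s^2 \<le> b / t^2"
proof -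
  have s: "0 < s" "1 \<le> s" using t by auto
  have "lam / s^2 \<le> lam / s"
    using s pos by (intro divide_left_mono) (auto simp: power2_eq_square)
  then have "16/3 * (k / s)^3 * (lam / s^2 + a / s) \<le> 16/3 * (k / s)^3 * ((lam + a) / s)"
    using pos s by (intro mult_left_mono) (auto simp: add_divide_distrib)
  also have "\<dots> = (16/3 * k^3 * (lam + a) / b) * b / s^4"
    using pos s by (simp add: field_simps power3_eq_cube power4_eq_xxxx)
  also have "\<dots> \<le> s * b / s^4"
    using s_large s pos by (intro divide_right_mono mult_right_mono) auto
  also have "\<dots> = b / s^3"
    using s by (simp add: field_simps power3_eq_cube power4_eq_xxxx)
  finally have "16/3 * (k / s)^3 * (lam / s^2 + a / s) \<le> b / s^3" .
  moreover have "b / s^3 + b / s^2 \<le> b / t^2"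
  proof -
    have "b * (t^2 * (1 + s)) \<le> b * s^3"
      using t pos by (intro mult_left_mono) (auto simp: power2_eq_square power3_eq_cube algebra_simps)
    moreover have "b / s^3 + b / s^2 = b * (1 + s) / s^3"
      using s by (simp add: field_simps power2_eq_square power3_eq_cube)
    moreover have "b * (1 + s) / s^3 \<le> b / t^2 \<longleftrightarrow> b * (t^2 * (1 + s)) \<le> b * s^3"
      using s t by (simp add: field_simps)
    ultimately show ?thesis by simp
  qed
  ultimately show ?thesis by linarith
qed

lemma lower_potential_step_ineq:
  fixes S t k a b lam :: real
  assumes t: "1 \<le> t" and k: "0 < k" "k < a" and lam: "lam = k + 2 * k^2"
    and b: "b = (a - k) * (1 + 4 * k) / 6" and t_large: "16/3 * k^3 * (lam + a) / b \<le> t + 1"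
  defines "p \<equiv> (1 - tanh (2 * k * S / (t + 1))) / 2"
  shows "p * ((lam / (t+1)^2 + a / (t+1)) * (S+1)^2 + b / (t+1)^2 * (S+1)^4) +
         (1 - p) * ((lam / (t+1)^2 + a / (t+1)) * (S-1)^2 + b / (t+1)^2 * (S-1)^4) + (2 * k * S / (t+1))^2 / 2
       \<le> a / t * S^2 + b / t^2 * S^4 + (lam / (t+1)^2 + a / (t+1)) + b / (t+1)^2"
proof -
  define s where "s = t + 1"
  have s: "0 < s" "s = t + 1" using t s_def by auto
  define q where "q = k / s"
  define W where "W = lam / s^2 + a / s"
  define B where "B = b / s^2"
  define tau where "tau = tanh (2 * q * S)"
  have lam_pos: "0 < lam" using lam k by (simp add: add_pos_nonneg)
  have "0 < (a - k) * (1 + 4 * k)" using k by (intro mult_pos_pos) auto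
  then have b_pos: "0 < b" using b by simp
  have q0: "0 \<le> q" and W0: "0 \<le> W" and B0: "0 \<le> B"
    using k lam_pos b_pos s by (auto simp: q_def W_def B_def)
  have y: "2 * k * S / (t + 1) = 2 * q * S"
    unfolding q_def s_def by simp
  have "p * (W * (S+1)^2 + B * (S+1)^4) + (1 - p) * (W * (S-1)^2 + B * (S-1)^4) + (2 * q * S)^2 / 2 =
      W * (S^2 + 1 - 2 * (S * tau)) + B * (S^4 + 6 * S^2 + 1 - 4 * S^2 * (S * tau) - 4 * (S * tau))
      + 2 * q^2 * S^2"
    unfolding p_def y tau_def by (simp add: algebra_simps power2_eq_square power4_eq_xxxx)
  also have "\<dots> \<le> W * (S^2 + 1 - 4 * q * S^2 + 16/3 * q^3 * S^4) + B * (S^4 + 6 * S^2 + 1) + 2 * q^2 * S^2"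
  proof -
    have st: "0 \<le> S * tau" "2 * q * S^2 - 8/3 * q^3 * S^4 \<le> S * tau"
      unfolding tau_def using mult_tanh_nonneg[of "2 * q" S] mult_tanh_ge[OF q0] q0
      by (simp_all add: mult.assoc)
    have "W * (S^2 + 1 - 2 * (S * tau)) \<le> W * (S^2 + 1 - 4 * q * S^2 + 16/3 * q^3 * S^4)"
      using st W0 by (intro mult_left_mono) auto
    moreover have "B * (S^4 + 6 * S^2 + 1 - 4 * S^2 * (S * tau) - 4 * (S * tau)) \<le> B * (S^4 + 6 * S^2 + 1)"
    proof -
      have "0 \<le> S^2 * (S * tau)" using st by simp
      then show ?thesis using st B0 by (intro mult_left_mono) linarith+
    qed
    ultimately show ?thesis by linarith
  qed
  also have "\<dots> = S^2 * (W * (1 - 4 * q) + 6 * B + 2 * q^2) + S^4 * (16/3 * q^3 * W + B) + (W + B)"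
    by (simp add: algebra_simps)
  also have "\<dots> \<le> S^2 * (a / t) + S^4 * (b / t^2) + (W + B)"
  proof -
    have "W * (1 - 4 * q) + 6 * B + 2 * q^2 \<le> a / t"
      using lower_potential_quadratic_coeff[OF t s(2) k lam b] unfolding W_def B_def q_def .
    moreover have "16/3 * q^3 * W + B \<le> b / t^2"
      using lower_potential_quartic_coeff[OF t s(2) k(1) lam_pos _ b_pos] k t_large
      unfolding W_def B_def q_def s_def by simp
    ultimately show ?thesis
      by (intro add_mono mult_left_mono order_refl) simp_all
  qed
  finally show ?thesis
    unfolding W_def B_def y s_def by (simp add: mult.commute)
qed

lemma lower_potential_condition:
  fixes k a lam b S :: real and t0 N t :: nat
  assumes k: "0 < k" "k < a" and lam: "lam = k + 2 * k^2" and b: "b = (a - k) * (1 + 4 * k) / 6"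
    and t0: "1 \<le> t0" "16/3 * k^3 * (lam + a) / b \<le> real t0" and t: "t0 \<le> t" "t < N"
  defines "Phi \<equiv> \<lambda>(t :: nat) S. a / real t * S^2 + b / (real t)^2 * S^4
      + (\<Sum>j\<in>{t<..N}. lam / (real j)^2 + a / real j + b / (real j)^2)"
    and "y \<equiv> \<lambda>(t :: nat) (S :: real). 2 * k * S / (real t + 1)"
  shows "(1 - tanh (y t S)) / 2 * (lam / (real (Suc t))^2 * (S+1)^2 + Phi (Suc t) (S+1)) +
      (1 - (1 - tanh (y t S)) / 2) * (lam / (real (Suc t))^2 * (S-1)^2 + Phi (Suc t) (S-1))
      + (y t S)^2 / 2 \<le> Phi t S"
proof -
  define g where "g t = (\<Sum>j\<in>{t<..N}. lam / (real j)^2 + a / real j + b / (real j)^2)" for t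
  define p where "p = (1 - tanh (2 * k * S / (real t + 1))) / 2"
  define W where "W = lam / (real t + 1)^2 + a / (real t + 1)"
  define B where "B = b / (real t + 1)^2"
  have "p * (W * (S+1)^2 + B * (S+1)^4) + (1 - p) * (W * (S-1)^2 + B * (S-1)^4)
        + (2 * k * S / (real t + 1))^2 / 2
      \<le> a / real t * S^2 + b / (real t)^2 * S^4 + W + B"
    unfolding p_def W_def B_def using t0 t
    by (intro lower_potential_step_ineq[OF _ k lam b]) auto
  moreover have "g t = g (Suc t) + (W + B)"
  proof -
    have "{t<..N} = insert (Suc t) {Suc t<..N}" using t by auto
    then show ?thesis unfolding g_def W_def B_def by (simp add: add.commute add.left_commute)
  qed
  moreover have "lam / (real (Suc t))^2 * x^2 + Phi (Suc t) x = W * x^2 + B * x^4 + g (Suc t)" for x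
    unfolding Phi_def W_def B_def g_def[symmetric] by (simp add: algebra_simps)
  ultimately show ?thesis
    unfolding Phi_def y_def p_def g_def[symmetric] by (simp add: algebra_simps)
qed

lemma sum_inverse_le_ln_ratio:
  assumes "1 \<le> m" "m \<le> N"
  shows "(\<Sum>j\<in>{m<..N}. 1 / real j) \<le> ln (real N) - ln (real m)"
  using assms(2)
proof (induction N rule: dec_induct)
  case base then show ?case by simp
next
  case (step n)
  have n1: "real n \<ge> 1" using step assms by simp
  have eq: "{m<..Suc n} = insert (Suc n) {m<..n}" using step by auto
  have "ln (real n / real (Suc n)) \<le> real n / real (Suc n) - 1"
    by (rule ln_le_minus_one) (use n1 in simp)
  also have "\<dots> = - (1 / real (Suc n))" by (simp add: field_simps)
  finally have "1 / real (Suc n) \<le> ln (real (Suc n)) - ln (real n)"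
    using n1 by (simp add: ln_div)
  then show ?case unfolding eq using step by simp
qed

lemma sum_inverse_square_le:
  assumes "1 \<le> m" "m \<le> N"
  shows "(\<Sum>j\<in>{m<..N}. 1 / (real j)^2) \<le> 1 / real m - 1 / real N"
  using assms(2)
proof (induction N rule: dec_induct)
  case base then show ?case by simp
next
  case (step n)
  have n1: "real n \<ge> 1" using step assms by simp
  have eq: "{m<..Suc n} = insert (Suc n) {m<..n}" using step by auto
  have "1 / real n - 1 / real (Suc n) = 1 / (real n * real (Suc n))"
    using n1 by (simp add: field_simps)
  moreover have "1 / (real (Suc n))^2 \<le> 1 / (real n * real (Suc n))"
    using n1 unfolding power2_eq_square by (intro divide_left_mono mult_right_mono) auto
  ultimately have "1 / (real (Suc n))^2 \<le> 1 / real n - 1 / real (Suc n)" by simp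
  then show ?case unfolding eq using step by simp
qed

lemma lower_potential_tail_le:
  assumes t0: "1 \<le> t0" "t0 \<le> N" and pos: "0 \<le> lam" "0 \<le> a" "0 \<le> b"
  shows "(\<Sum>j\<in>{t0<..N}. lam / (real j)^2 + a / real j + b / (real j)^2) \<le> lam + b + a * ln (real N)"
proof -
  have "1 / real t0 \<le> 1"
    using t0 by simp
  then have "(\<Sum>j\<in>{t0<..N}. 1 / (real j)^2) \<le> 1"
    using sum_inverse_square_le[OF t0] by (smt (verit) divide_nonneg_nonneg of_nat_0_le_iff)
  moreover have "0 \<le> ln (real t0)"
    using t0 by simp
  then have "(\<Sum>j\<in>{t0<..N}. 1 / real j) \<le> ln (real N)"
    using sum_inverse_le_ln_ratio[OF t0] by linarith
  ultimately have "lam * (\<Sum>j\<in>{t0<..N}. 1 / (real j)^2) + a * (\<Sum>j\<in>{t0<..N}. 1 / real j)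
      + b * (\<Sum>j\<in>{t0<..N}. 1 / (real j)^2) \<le> lam * 1 + a * ln (real N) + b * 1"
    using pos by (intro add_mono mult_left_mono) auto
  then show ?thesis
    by (simp add: sum.distrib sum_distrib_left)
qed

lemma quartic_potential_le:
  fixes a b S :: real and t0 :: nat
  assumes "0 \<le> a" "0 \<le> b" "1 \<le> t0" "\<bar>S\<bar> \<le> real t0"
  shows "a / real t0 * S^2 + b / (real t0)^2 * S^4 \<le> a * real t0 + b * (real t0)^2"
proof -
  have S2: "S^2 \<le> (real t0)^2"
    using assms(4) by (metis abs_le_square_iff abs_of_nat)
  then have "S^2 * S^2 \<le> (real t0)^2 * (real t0)^2"
    by (intro mult_mono) auto
  then have S4: "S^4 \<le> (real t0)^4"
    by (simp add: power4_eq_xxxx power2_eq_square)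
  have "a / real t0 * S^2 \<le> a / real t0 * (real t0)^2"
    using S2 assms by (intro mult_left_mono) auto
  moreover have "b / (real t0)^2 * S^4 \<le> b / (real t0)^2 * (real t0)^4"
    using S4 assms by (intro mult_left_mono) auto
  ultimately show ?thesis
    using assms by (simp add: power2_eq_square power4_eq_xxxx)
qed

lemma L_laplace_ge_exp:
  assumes k: "0 < k" "k < a"
  shows "\<exists>C N0. \<forall>N\<ge>N0. exp (- a * ln (real N) - C) \<le> L_laplace (k + 2 * k^2) N"
proof -
  define lam where "lam = k + 2 * k^2"
  define b where "b = (a - k) * (1 + 4 * k) / 6"
  have lam_pos: "0 < lam"
    unfolding lam_def using k by (simp add: add_pos_nonneg)
  have "0 < (a - k) * (1 + 4 * k)"
    using k by (intro mult_pos_pos) auto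
  then have b_pos: "0 < b"
    unfolding b_def by simp
  define t0 :: nat where "t0 = nat \<lceil>max 1 (16/3 * k^3 * (lam + a) / b)\<rceil>"
  have t0: "1 \<le> t0" "16/3 * k^3 * (lam + a) / b \<le> real t0"
    unfolding t0_def by linarith+
  show ?thesis
  proof (intro exI allI impI)
    fix N :: nat
    assume N: "t0 \<le> N"
    define g where "g t = (\<Sum>j\<in>{t<..N}. lam / (real j)^2 + a / real j + b / (real j)^2)" for t
    define Phi where "Phi t S = a / real t * S^2 + b / (real t)^2 * S^4 + g t" for t S
    have Phi_nonneg: "0 \<le> Phi N S" for S
      using k b_pos by (simp add: Phi_def g_def)
    have at_t0: "exp (- (a * real t0 + b * (real t0)^2 + g t0))
        \<le> walk_laplace (\<lambda>j. lam / (real j)^2) (N - t0) t0 S" if S: "\<bar>S\<bar> \<le> real t0" for S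
    proof -
      have "a / real t0 * S^2 + b / (real t0)^2 * S^4 \<le> a * real t0 + b * (real t0)^2"
        using k b_pos t0 S by (intro quartic_potential_le) auto
      then have "exp (- (a * real t0 + b * (real t0)^2 + g t0)) \<le> exp (- Phi t0 S)"
        by (simp add: Phi_def)
      also have "\<dots> \<le> walk_laplace (\<lambda>j. lam / (real j)^2) (N - t0) t0 S"
        using exp_potential_le_walk_laplace[of t0 N "\<lambda>t S. 2 * k * S / (real t + 1)"
            "\<lambda>j. lam / (real j)^2" Phi t0 S]
          lower_potential_condition[OF k lam_def b_def t0] Phi_nonneg N
        unfolding Phi_def g_def by simp
      finally show ?thesis .
    qed
    have "g t0 \<le> lam + b + a * ln (real N)"
      unfolding g_def using lower_potential_tail_le[OF t0(1) N] lam_pos k b_pos by simp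
    then have "exp (- a * ln (real N) - (a * real t0 + b * (real t0)^2 + lam + b + lam * real t0))
        \<le> exp (- (a * real t0 + b * (real t0)^2 + g t0 + lam * real t0))"
      by simp
    also have "\<dots> \<le> L_laplace lam N"
      using walk_laplace_ge_initial_segment[OF less_imp_le[OF lam_pos] N at_t0, of 0 0]
      unfolding L_laplace_def by simp
    finally show "exp (- a * ln (real N) - (a * real t0 + b * (real t0)^2 + lam + b + lam * real t0))
        \<le> L_laplace (k + 2 * k^2) N"
      unfolding lam_def .
  qed
qed

lemma eventually_le_mult_ln:
  fixes C e :: real
  assumes "0 < e"
  shows "eventually (\<lambda>n. C \<le> e * ln (real n)) sequentially"
proof -
  have "filterlim (\<lambda>n. ln (real n)) at_top sequentially"
    by (rule filterlim_compose[OF ln_at_top filterlim_real_sequentially])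
  then have "eventually (\<lambda>n. C / e \<le> ln (real n)) sequentially"
    by (simp add: filterlim_at_top)
  then show ?thesis
    by eventually_elim (use assms in \<open>simp add: field_simps\<close>)
qed

lemma L_laplace_upper_rate:
  assumes k: "0 < k" and d: "0 < delta"
  shows "eventually (\<lambda>n. L_laplace (k + 2 * k^2) n \<le> exp (- (k - delta) * ln (real n))) sequentially"
proof -
  define beta where "beta = k - min (delta / 2) (k / 2)"
  have beta: "0 < beta" "beta < k" "k - delta / 2 \<le> beta"
    unfolding beta_def using k d by auto
  then have "beta^2 < k^2"
    by (intro power_strict_mono) auto
  with beta have "0 < (k + 2 * k^2) - beta - 2 * beta^2"
    by simp
  then obtain C where C: "\<forall>N\<ge>1. L_laplace (k + 2 * k^2) N \<le> exp (- beta * ln (real N) + C)"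
    using L_laplace_le_exp[OF beta(1)] by blast
  show ?thesis
    using eventually_le_mult_ln[OF half_gt_zero[OF d], of C] eventually_ge_at_top[of 1]
  proof eventually_elim
    case (elim n)
    have "L_laplace (k + 2 * k^2) n \<le> exp (- beta * ln (real n) + C)"
      using C elim by simp
    also have "\<dots> \<le> exp (- (k - delta) * ln (real n))"
    proof -
      have "k * ln (real n) \<le> (beta + delta / 2) * ln (real n)"
        using elim beta(3) by (intro mult_right_mono) auto
      then show ?thesis
        using elim by (simp add: algebra_simps)
    qed
    finally show ?case .
  qed
qed

lemma L_laplace_lower_rate:
  assumes k: "0 < k" and d: "0 < delta"
  shows "eventually (\<lambda>n. exp (- (k + delta) * ln (real n)) \<le> L_laplace (k + 2 * k^2) n) sequentially"
proof -
  obtain C N0 where C: "\<forall>N\<ge>N0. exp (- (k + delta / 2) * ln (real N) - C) \<le> L_laplace (k + 2 * k^2) N"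
    using L_laplace_ge_exp[of k "k + delta / 2"] k d by auto
  show ?thesis
    using eventually_le_mult_ln[OF half_gt_zero[OF d], of C] eventually_ge_at_top[of N0]
  proof eventually_elim
    case (elim n)
    have "exp (- (k + delta) * ln (real n)) \<le> exp (- (k + delta / 2) * ln (real n) - C)"
      using elim by (simp add: algebra_simps)
    also have "\<dots> \<le> L_laplace (k + 2 * k^2) n"
      using C elim by simp
    finally show ?case .
  qed
qed

section \<open>From the Laplace transform to the probability\<close>

lemma small_L_prob_le_L_laplace:
  assumes "lam \<ge> 0"
  shows "small_L_prob c n \<le> exp (lam * c * ln (real n)) * L_laplace lam n"
proof -
  have "small_L_prob c n \<le> path_expectation n (\<lambda>xs. exp (lam * c * ln (real n)) * exp (- lam * Lstat n xs))"
    unfolding small_L_prob_eq_path_expectation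
  proof (rule path_expectation_mono)
    fix xs
    show "(if Lstat n xs \<le> c * ln (real n) then 1 else 0) \<le> exp (lam * c * ln (real n)) * exp (- lam * Lstat n xs)"
    proof (cases "Lstat n xs \<le> c * ln (real n)")
      case True
      then have "lam * Lstat n xs \<le> lam * (c * ln (real n))" using assms by (intro mult_left_mono) auto
      then have "0 \<le> lam * c * ln (real n) + - lam * Lstat n xs" by (simp add: algebra_simps)
      then have "1 \<le> exp (lam * c * ln (real n) + - lam * Lstat n xs)" by simp
      also have "\<dots> = exp (lam * c * ln (real n)) * exp (- lam * Lstat n xs)" by (rule exp_add)
      finally show ?thesis using True by simp
    qed simp
  qed
  then show ?thesis unfolding L_laplace_eq_path_expectation path_expectation_cmult .
qed

text \<open>Split according to whether \<open>L\<^sub>n\<close> lies in \<open>[c\<^sub>1 T, c T]\<close>, above \<open>c T\<close> or below \<open>c\<^sub>1 T\<close>;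
  on the last two events \<open>exp (- \<lambda> L\<^sub>n)\<close> is dominated by the Laplace transforms at \<open>\<lambda>\<^sub>1\<close> resp. \<open>\<lambda>\<^sub>2\<close>.\<close>
lemma exp_neg_mult_le_three_terms:
  fixes L T lam lam1 lam2 c c1 :: real
  assumes "lam1 \<le> lam" "lam \<le> lam2" "0 \<le> lam"
  shows "exp (- lam * L) \<le> exp (- lam * c1 * T) * (if L \<le> c * T then 1 else 0)
    + exp ((lam1 - lam) * c * T) * exp (- lam1 * L) + exp ((lam2 - lam) * c1 * T) * exp (- lam2 * L)"
proof -
  consider "c * T < L" | "L < c1 * T" | "c1 * T \<le> L" "L \<le> c * T"
    by linarith
  then have "exp (- lam * L) \<le> exp (- lam * c1 * T) * (if L \<le> c * T then 1 else 0)
      \<or> exp (- lam * L) \<le> exp ((lam1 - lam) * c * T) * exp (- lam1 * L)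
      \<or> exp (- lam * L) \<le> exp ((lam2 - lam) * c1 * T) * exp (- lam2 * L)"
  proof cases
    case 1
    then have "(lam - lam1) * (c * T) \<le> (lam - lam1) * L"
      using assms by (intro mult_left_mono) auto
    then show ?thesis by (simp add: exp_add[symmetric] algebra_simps)
  next
    case 2
    then have "(lam2 - lam) * L \<le> (lam2 - lam) * (c1 * T)"
      using assms by (intro mult_left_mono) auto
    then show ?thesis by (simp add: exp_add[symmetric] algebra_simps)
  next
    case 3
    then have "lam * (c1 * T) \<le> lam * L"
      using assms by (intro mult_left_mono) auto
    with 3 show ?thesis by simp
  qed
  then show ?thesis
    by (smt (verit) exp_gt_zero mult_nonneg_nonneg)
qed

lemma L_laplace_le_small_L_prob_plus_tails:
  assumes "lam1 \<le> lam" "lam \<le> lam2" "0 \<le> lam"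
  shows "L_laplace lam n \<le>
    exp (- lam * c1 * ln (real n)) * small_L_prob c n
    + exp ((lam1 - lam) * c * ln (real n)) * L_laplace lam1 n
    + exp ((lam2 - lam) * c1 * ln (real n)) * L_laplace lam2 n"
  unfolding L_laplace_eq_path_expectation small_L_prob_eq_path_expectation
    path_expectation_add[symmetric] path_expectation_cmult[symmetric]
  using exp_neg_mult_le_three_terms[OF assms] by (intro path_expectation_mono) blast

text \<open>\<open>E exp (- \<lambda> L\<^sub>n) = n^(-\<kappa> + o(1))\<close> for \<open>\<lambda> = \<kappa> + 2\<kappa>\<^sup>2\<close>, and \<open>Krate c\<close> is the Legendre transform
  \<open>sup\<^sub>\<lambda> (\<kappa>(\<lambda>) - \<lambda>c)\<close>, attained at \<open>\<lambda> = opt_lambda c\<close>, \<open>\<kappa> = opt_kappa c\<close>.\<close>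
definition opt_kappa :: "real \<Rightarrow> real" where
  "opt_kappa c = (1 - c) / (4 * c)"

definition opt_lambda :: "real \<Rightarrow> real" where
  "opt_lambda c = opt_kappa c + 2 * (opt_kappa c)^2"

lemma opt_kappa_pos: "0 < c \<Longrightarrow> c < 1 \<Longrightarrow> 0 < opt_kappa c"
  unfolding opt_kappa_def by simp

lemma opt_lambda_less:
  assumes "0 < x" "x < y"
  shows "opt_lambda y < opt_lambda x"
proof -
  have "opt_lambda z = 1 / (8 * z^2) - 1/8" if "0 < z" for z
    using that unfolding opt_lambda_def opt_kappa_def by (simp add: field_simps power2_eq_square)
  moreover have "x^2 < y^2"
    using assms by (intro power_strict_mono) auto
  then have "1 / (8 * y^2) < 1 / (8 * x^2)"
    using assms by (intro divide_strict_left_mono) auto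
  ultimately show ?thesis
    using assms by simp
qed

lemma opt_lambda_mult_minus_opt_kappa:
  "0 < x \<Longrightarrow> 0 < y \<Longrightarrow> opt_lambda x * y - opt_kappa x = (y - x)^2 / (8 * y * x^2) - Krate y"
  unfolding opt_lambda_def opt_kappa_def Krate_def by (simp add: field_simps power2_eq_square)

lemma Krate_left_approx:
  assumes "0 < c" "0 < delta"
  shows "\<exists>c1. 0 < c1 \<and> c1 < c \<and> Krate c1 \<le> Krate c + delta"
proof -
  have "isCont Krate c"
    unfolding Krate_def using assms by (intro continuous_intros) auto
  then have "(Krate \<longlongrightarrow> Krate c) (at_left c)"
    by (simp add: isCont_def filterlim_at_split)
  then have "eventually (\<lambda>x. Krate x < Krate c + delta) (at_left c)"
    using assms by (intro order_tendstoD) auto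
  moreover have "eventually (\<lambda>x. x \<in> {0<..<c}) (at_left c)"
    by (rule eventually_at_left_real[OF assms(1)])
  ultimately have "eventually (\<lambda>x. 0 < x \<and> x < c \<and> Krate x \<le> Krate c + delta) (at_left c)"
    by eventually_elim auto
  then show ?thesis
    by (auto dest: eventually_happens)
qed

lemma small_L_prob_upper_rate:
  assumes c: "0 < c" "c < 1" and d: "0 < delta"
  shows "eventually (\<lambda>n. small_L_prob c n \<le> exp (- (Krate c - delta) * ln (real n))) sequentially"
  using L_laplace_upper_rate[OF opt_kappa_pos[OF c] d]
proof eventually_elim
  case (elim n)
  have K: "opt_kappa c - opt_lambda c * c = Krate c"
    using opt_lambda_mult_minus_opt_kappa[of c c] c by simp
  have "0 \<le> opt_lambda c"
    using opt_kappa_pos[OF c] by (simp add: opt_lambda_def)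
  then have "small_L_prob c n \<le> exp (opt_lambda c * c * ln (real n)) * L_laplace (opt_lambda c) n"
    by (rule small_L_prob_le_L_laplace)
  also have "\<dots> \<le> exp (opt_lambda c * c * ln (real n)) * exp (- (opt_kappa c - delta) * ln (real n))"
    using elim by (simp add: opt_lambda_def)
  also have "\<dots> = exp (- (Krate c - delta) * ln (real n))"
    unfolding K[symmetric] by (simp add: exp_add[symmetric] algebra_simps)
  finally show ?case .
qed

lemma exp_mult_le_quarter_of_margin:
  fixes r F k k' m eta T :: real
  assumes "0 \<le> F" "F \<le> exp (- (k' - eta) * T)" "k' - r = k + m" "ln 4 \<le> (m - 2 * eta) * T"
  shows "exp (r * T) * F \<le> exp (- (k + eta) * T) / 4"
proof -
  have "exp (r * T) * F \<le> exp (r * T) * exp (- (k' - eta) * T)"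
    using assms by (intro mult_left_mono) auto
  also have "\<dots> = exp (- (k + eta) * T) * exp (- ((m - 2 * eta) * T))"
  proof -
    have "r * T - (k' - eta) * T = - ((k' - r) * T) + eta * T"
      by (simp add: algebra_simps)
    then show ?thesis
      unfolding assms(3) by (simp add: exp_add[symmetric] algebra_simps)
  qed
  also have "\<dots> \<le> exp (- (k + eta) * T) * exp (- ln 4)"
    using assms(4) by (intro mult_left_mono) auto
  finally show ?thesis
    by (simp add: exp_minus)
qed

text \<open>With \<open>\<lambda> = opt_lambda c\<^sub>0\<close>, the tail terms of the decomposition are smaller than
  \<open>E exp (- \<lambda> L\<^sub>n) \<ge> n^(-\<kappa> - \<eta>)\<close> by the factors \<open>n^(2\<eta> - mA)\<close> and \<open>n^(2\<eta> - mB)\<close>.\<close>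
lemma small_L_prob_ge_tilted:
  assumes c: "0 < c1" "c1 < c0" "c0 < c" "c < 1"
  defines "mA \<equiv> (c - c0)^2 / (8 * c * c0^2)" and "mB \<equiv> (c1 - c0)^2 / (8 * c1 * c0^2)"
  assumes eta: "0 < eta" "eta \<le> mA / 4" "eta \<le> mB / 4"
  shows "eventually (\<lambda>n. exp (- (opt_kappa c0 + eta) * ln (real n)) / 2
    \<le> exp (- opt_lambda c0 * c1 * ln (real n)) * small_L_prob c n) sequentially"
proof -
  define k where "k = opt_kappa c0"
  define lam where "lam = opt_lambda c0"
  define lam1 where "lam1 = opt_lambda c"
  define lam2 where "lam2 = opt_lambda c1"
  have margin_A: "opt_kappa c - lam1 * c + lam * c = k + mA"
    using opt_lambda_mult_minus_opt_kappa[of c0 c] opt_lambda_mult_minus_opt_kappa[of c c] c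
    unfolding k_def lam_def lam1_def mA_def by simp
  have margin_B: "opt_kappa c1 - lam2 * c1 + lam * c1 = k + mB"
    using opt_lambda_mult_minus_opt_kappa[of c0 c1] opt_lambda_mult_minus_opt_kappa[of c1 c1] c
    unfolding k_def lam_def lam2_def mB_def by simp
  have lam_order: "lam1 \<le> lam" "lam \<le> lam2" "0 \<le> lam"
    using opt_lambda_less[of c0 c] opt_lambda_less[of c1 c0] opt_kappa_pos[of c0] c
    by (auto simp: lam_def lam1_def lam2_def opt_lambda_def)
  have "0 < c0" "c0 < 1" "c1 < 1"
    using c by auto
  then have laplace_rates:
      "eventually (\<lambda>n. exp (- (k + eta) * ln (real n)) \<le> L_laplace lam n) sequentially"
      "eventually (\<lambda>n. L_laplace lam1 n \<le> exp (- (opt_kappa c - eta) * ln (real n))) sequentially"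
      "eventually (\<lambda>n. L_laplace lam2 n \<le> exp (- (opt_kappa c1 - eta) * ln (real n))) sequentially"
    using L_laplace_lower_rate[OF opt_kappa_pos eta(1), of c0]
      L_laplace_upper_rate[OF opt_kappa_pos eta(1), of c] L_laplace_upper_rate[OF opt_kappa_pos eta(1), of c1] c
    by (simp_all add: k_def lam_def lam1_def lam2_def opt_lambda_def)
  have margins: "0 < mA - 2 * eta" "0 < mB - 2 * eta"
    using eta by auto
  show ?thesis
    using laplace_rates eventually_le_mult_ln[OF margins(1), of "ln 4"]
      eventually_le_mult_ln[OF margins(2), of "ln 4"]
  proof eventually_elim
    case (elim n)
    define T where "T = ln (real n)"
    have "exp (- (k + eta) * T) \<le> L_laplace lam n"
      using elim unfolding T_def by simp
    also have "\<dots> \<le> exp (- lam * c1 * T) * small_L_prob c n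
        + exp ((lam1 - lam) * c * T) * L_laplace lam1 n + exp ((lam2 - lam) * c1 * T) * L_laplace lam2 n"
      unfolding T_def by (rule L_laplace_le_small_L_prob_plus_tails[OF lam_order])
    also have "\<dots> \<le> exp (- lam * c1 * T) * small_L_prob c n
        + exp (- (k + eta) * T) / 4 + exp (- (k + eta) * T) / 4"
    proof -
      have "exp ((lam1 - lam) * c * T) * L_laplace lam1 n \<le> exp (- (k + eta) * T) / 4"
        using elim margin_A less_imp_le[OF L_laplace_pos] unfolding T_def
        by (intro exp_mult_le_quarter_of_margin[where m = mA]) (auto simp: algebra_simps)
      moreover have "exp ((lam2 - lam) * c1 * T) * L_laplace lam2 n \<le> exp (- (k + eta) * T) / 4"
        using elim margin_B less_imp_le[OF L_laplace_pos] unfolding T_def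
        by (intro exp_mult_le_quarter_of_margin[where m = mB]) (auto simp: algebra_simps)
      ultimately show ?thesis by simp
    qed
    finally show ?case
      unfolding T_def k_def lam_def by simp
  qed
qed

lemma small_L_prob_lower_rate:
  assumes c: "0 < c" "c < 1" and d: "0 < delta"
  shows "eventually (\<lambda>n. exp (- (Krate c + delta) * ln (real n)) \<le> small_L_prob c n) sequentially"
proof -
  obtain c1 where c1: "0 < c1" "c1 < c" "Krate c1 \<le> Krate c + delta / 2"
    using Krate_left_approx[OF c(1) half_gt_zero[OF d]] by blast
  define c0 where "c0 = (c1 + c) / 2"
  have c0: "c1 < c0" "c0 < c"
    using c1 by (auto simp: c0_def)
  define mA where "mA = (c - c0)^2 / (8 * c * c0^2)"
  define mB where "mB = (c1 - c0)^2 / (8 * c1 * c0^2)"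
  define eta where "eta = min (min mA mB) delta / 4"
  have "0 < mA" "0 < mB"
    using c c0 c1 by (auto simp: mA_def mB_def)
  then have eta: "0 < eta" "eta \<le> mA / 4" "eta \<le> mB / 4" "eta \<le> delta / 4"
    using d by (auto simp: eta_def)
  have tilt: "opt_lambda c0 * c1 - opt_kappa c0 - eta \<ge> - (Krate c + 3 / 4 * delta)"
    using opt_lambda_mult_minus_opt_kappa[of c0 c1] c0 c1 eta \<open>0 < mB\<close> by (simp add: mB_def)
  show ?thesis
    using small_L_prob_ge_tilted[OF c1(1) c0 c(2) eta(1), folded mA_def mB_def, OF eta(2,3)]
      eventually_le_mult_ln[OF half_gt_zero[OF half_gt_zero[OF d]], of "ln 2"] eventually_ge_at_top[of 1]
  proof eventually_elim
    case (elim n)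
    define T where "T = ln (real n)"
    have T: "0 \<le> T"
      using elim by (simp add: T_def)
    have "exp (- (Krate c + delta) * T) = exp (- (Krate c + 3 / 4 * delta) * T) * exp (- (delta / 4 * T))"
      by (simp add: exp_add[symmetric] algebra_simps)
    also have "\<dots> \<le> exp (- (Krate c + 3 / 4 * delta) * T) * exp (- ln 2)"
      using elim unfolding T_def by (intro mult_left_mono) auto
    also have "\<dots> = exp (- (Krate c + 3 / 4 * delta) * T) / 2"
      by (simp add: exp_minus)
    also have "\<dots> \<le> exp ((opt_lambda c0 * c1 - opt_kappa c0 - eta) * T) / 2"
      using tilt T by (simp add: mult_right_mono)
    also have "\<dots> = exp (opt_lambda c0 * c1 * T) * (exp (- (opt_kappa c0 + eta) * T) / 2)"
      by (simp add: exp_add[symmetric] algebra_simps)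
    also have "\<dots> \<le> exp (opt_lambda c0 * c1 * T) * (exp (- opt_lambda c0 * c1 * T) * small_L_prob c n)"
      using elim unfolding T_def by (intro mult_left_mono) auto
    also have "\<dots> = small_L_prob c n"
      by (simp add: mult.assoc[symmetric] exp_add[symmetric])
    finally show ?case
      unfolding T_def .
  qed
qed

lemma vanishing_exponent_correction:
  fixes P :: "nat \<Rightarrow> real" and K :: real
  assumes bounds: "\<And>delta. 0 < delta \<Longrightarrow> eventually (\<lambda>n.
      exp (- (K + delta) * ln (real n)) \<le> P n \<and> P n \<le> exp (- (K - delta) * ln (real n))) sequentially"
  shows "\<exists>\<epsilon> :: nat \<Rightarrow> real. \<epsilon> \<longlonglongrightarrow> 0 \<and> (\<forall>\<^sub>F n in sequentially. P n = exp (- (K + \<epsilon> n) * ln (real n)))"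
proof (intro exI conjI)
  define \<epsilon> where "\<epsilon> n = - ln (P n) / ln (real n) - K" for n
  have close: "eventually (\<lambda>n. 0 < P n \<and> 0 < ln (real n) \<and> \<bar>\<epsilon> n\<bar> \<le> delta) sequentially"
    if "0 < delta" for delta
    using bounds[OF that] eventually_ge_at_top[of 2]
  proof eventually_elim
    case (elim n)
    define T where "T = ln (real n)"
    have T: "0 < T" and P: "0 < P n"
      using elim by (auto simp: T_def intro: less_le_trans[OF exp_gt_zero])
    have "- (K + delta) * T \<le> ln (P n)" "ln (P n) \<le> - (K - delta) * T"
      using elim P unfolding T_def by (metis ln_exp ln_le_cancel_iff exp_gt_zero)+
    then have "\<bar>- ln (P n) / T - K\<bar> \<le> delta"
      using T by (simp add: abs_le_iff field_simps)
    then show ?case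
      using P T by (simp add: \<epsilon>_def T_def)
  qed
  show "\<epsilon> \<longlonglongrightarrow> 0"
    unfolding tendsto_iff
  proof (intro allI impI)
    fix e :: real
    assume "0 < e"
    from close[OF half_gt_zero[OF this]] show "eventually (\<lambda>n. dist (\<epsilon> n) 0 < e) sequentially"
      by eventually_elim (use \<open>0 < e\<close> in auto)
  qed
  show "\<forall>\<^sub>F n in sequentially. P n = exp (- (K + \<epsilon> n) * ln (real n))"
    using close[OF zero_less_one]
    by eventually_elim (simp add: \<epsilon>_def)
qed

theorem theorem1p1:
  fixes c :: real
  assumes "0 < c" and "c < 1"
  shows "\<exists>\<epsilon> :: nat \<Rightarrow> real. \<epsilon> \<longlonglongrightarrow> 0 \<and>
           (\<forall>\<^sub>F n in sequentially.
              small_L_prob c n = exp (- (Krate c + \<epsilon> n) * ln (real n)))"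
proof (rule vanishing_exponent_correction)
  fix delta :: real
  assume "0 < delta"
  show "eventually (\<lambda>n. exp (- (Krate c + delta) * ln (real n)) \<le> small_L_prob c n
      \<and> small_L_prob c n \<le> exp (- (Krate c - delta) * ln (real n))) sequentially"
    using small_L_prob_lower_rate[OF assms \<open>0 < delta\<close>] small_L_prob_upper_rate[OF assms \<open>0 < delta\<close>]
    by eventually_elim simp
qed

end
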